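(* Let $F$ be a complete posheaf on a locale $X$. The following are equivalent: (1) $F$ is a complete Heyting sheaf, i.e. $sup_F\circ\mu_F=m_F\circ(1_F\times sup_F)$ as morphisms $F\times\mathbb{P}F\to F$. (2) Each $F(u)$, $u\in\mathcal{O}(X)$, is a complete Heyting algebra (frame), and for all $v\le u$ in $\mathcal{O}(X)$, $x\in F(u)$, $y\in F(v)$: $x\wedge l_{v,u}(y)=l_{v,u}(x|_v\wedge y)$, where $l_{v,u}:F(v)\to F(u)$ is the left adjoint of the restriction map $F(u)\to F(v)$.
   Context: Let $X$ be a locale with frame of opens $\mathcal{O}(X)$. A posheaf on $X$ is a sheaf of sets $F$ with (POS1) each $F(u)$ a poset; (POS2) restriction maps $F(u)\to F(v)$, $x\mapsto x|_v$ ($v\le u$), order-preserving; (POS3) if $u=\bigvee_i u_i$ and $s,t\in F(u)$ satisfy $s|_{u_i}\le t|_{u_i}$ for all $i$, then $s\le t$. A posheaf $F$ is complete iff every $F(u)$ is a complete lattice and every restriction map $F(u)\to F(v)$ ($v\le u$) is surjective and has both a left and a right adjoint (equivalently, the principal ideal embedding into the sheaf of downsheaves has a left adjoint, adjointness taken with respect to the order on points $x\in F(u)$, $y\in F(w)$: $x\le y$ iff $u\le w$ and $x\le y|_u$). $\mathbb{P}F$ is the sheaf with $\mathbb{P}F(u)$ the set of subsheaves of $F^u$ (the restriction of $F$ to $\downarrow u$), with restriction $S\mapsto S^v$. For complete $F$, $sup_F:\mathbb{P}F\to F$ sends $S\in\mathbb{P}F(u)$ to the least $z\in F(u)$ with $S(v)\subseteq\{y\in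 F(v)\mid y\le z|_v\}$ for all $v\le u$. $m_F:F\times F\to F$ is the componentwise binary meet $(x,y)\mapsto x\wedge y$ in $F(u)$ (the right adjoint of the diagonal). $\mu_F:F\times\mathbb{P}F\to\mathbb{P}F$ sends $(x,S)$, $x\in F(u)$, $S\in\mathbb{P}F(u)$, to the subsheaf of $F^u$ generated by the presheaf $v\mapsto\{x|_v\wedge y\mid y\in S(v)\}$, $v\le u$. *)

theory Defs
  imports Main
begin

(* The locale X is given by its frame of opens, a type 'o :: complete_lattice
   satisfying the frame distributive law (assumed in the theorem).
   A sheaf of sets F on X is given by its carriers  F :: 'o => 'a set,
   restriction maps  res u v :: 'a => 'a  (res u v x = x|_v, used for v <= u)
   and, for posheaves, the orders  le u  on F u. *)

definition ps_least :: "('a \<Rightarrow> 'a \<Rightarrow> bool) \<Rightarrow> 'a set \<Rightarrow> ('a \<Rightarrow> bool) \<Rightarrow> 'a" where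
  "ps_least le A P = (THE z. z \<in> A \<and> P z \<and> (\<forall>w\<in>A. P w \<longrightarrow> le z w))"

definition ps_partial_order :: "('a \<Rightarrow> 'a \<Rightarrow> bool) \<Rightarrow> 'a set \<Rightarrow> bool" where
  "ps_partial_order le A \<longleftrightarrow>
     (\<forall>x\<in>A. le x x) \<and>
     (\<forall>x\<in>A. \<forall>y\<in>A. le x y \<and> le y x \<longrightarrow> x = y) \<and>
     (\<forall>x\<in>A. \<forall>y\<in>A. \<forall>z\<in>A. le x y \<and> le y z \<longrightarrow> le x z)"

definition ps_is_lub :: "('a \<Rightarrow> 'a \<Rightarrow> bool) \<Rightarrow> 'a set \<Rightarrow> 'a set \<Rightarrow> 'a \<Rightarrow> bool" where
  "ps_is_lub le A S z \<longleftrightarrow> z \<in> A \<and> (\<forall>s\<in>S. le s z) \<and> (\<forall>w\<in>A. (\<forall>s\<in>S. le s w) \<longrightarrow> le z w)"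

definition ps_complete_lattice :: "('a \<Rightarrow> 'a \<Rightarrow> bool) \<Rightarrow> 'a set \<Rightarrow> bool" where
  "ps_complete_lattice le A \<longleftrightarrow> ps_partial_order le A \<and> (\<forall>S\<subseteq>A. \<exists>z. ps_is_lub le A S z)"

definition ps_join :: "('a \<Rightarrow> 'a \<Rightarrow> bool) \<Rightarrow> 'a set \<Rightarrow> 'a set \<Rightarrow> 'a" where
  "ps_join le A S = ps_least le A (\<lambda>z. \<forall>s\<in>S. le s z)"

definition ps_meet :: "('a \<Rightarrow> 'a \<Rightarrow> bool) \<Rightarrow> 'a set \<Rightarrow> 'a \<Rightarrow> 'a \<Rightarrow> 'a" where
  "ps_meet le A x y =
     (THE z. z \<in> A \<and> le z x \<and> le z y \<and> (\<forall>w\<in>A. le w x \<and> le w y \<longrightarrow> le w z))"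

definition ps_frame :: "('a \<Rightarrow> 'a \<Rightarrow> bool) \<Rightarrow> 'a set \<Rightarrow> bool" where
  "ps_frame le A \<longleftrightarrow> ps_complete_lattice le A \<and>
     (\<forall>x\<in>A. \<forall>S\<subseteq>A. ps_meet le A x (ps_join le A S) = ps_join le A {ps_meet le A x s | s. s \<in> S})"

definition is_presheaf :: "('o::complete_lattice \<Rightarrow> 'a set) \<Rightarrow> ('o \<Rightarrow> 'o \<Rightarrow> 'a \<Rightarrow> 'a) \<Rightarrow> bool" where
  "is_presheaf F res \<longleftrightarrow>
     (\<forall>u. \<forall>x\<in>F u. res u u x = x) \<and>
     (\<forall>u v. v \<le> u \<longrightarrow> (\<forall>x\<in>F u. res u v x \<in> F v)) \<and>
     (\<forall>u v w. w \<le> v \<longrightarrow> v \<le> u \<longrightarrow> (\<forall>x\<in>F u. res v w (res u v x) = res u w x))"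

definition is_sheaf :: "('o::complete_lattice \<Rightarrow> 'a set) \<Rightarrow> ('o \<Rightarrow> 'o \<Rightarrow> 'a \<Rightarrow> 'a) \<Rightarrow> bool" where
  "is_sheaf F res \<longleftrightarrow> is_presheaf F res \<and>
     (\<forall>U (s :: 'o \<Rightarrow> 'a).
        (\<forall>i\<in>U. s i \<in> F i) \<longrightarrow>
        (\<forall>i\<in>U. \<forall>j\<in>U. res i (inf i j) (s i) = res j (inf i j) (s j)) \<longrightarrow>
        (\<exists>!x. x \<in> F (Sup U) \<and> (\<forall>i\<in>U. res (Sup U) i x = s i)))"

definition is_posheaf ::
  "('o::complete_lattice \<Rightarrow> 'a set) \<Rightarrow> ('o \<Rightarrow> 'o \<Rightarrow> 'a \<Rightarrow> 'a) \<Rightarrow> ('o \<Rightarrow> 'a \<Rightarrow> 'a \<Rightarrow> bool) \<Rightarrow> bool" where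
  "is_posheaf F res le \<longleftrightarrow> is_sheaf F res \<and>
     (\<forall>u. ps_partial_order (le u) (F u)) \<and>
     (\<forall>u v. v \<le> u \<longrightarrow> (\<forall>x\<in>F u. \<forall>y\<in>F u. le u x y \<longrightarrow> le v (res u v x) (res u v y))) \<and>
     (\<forall>U. \<forall>s\<in>F (Sup U). \<forall>t\<in>F (Sup U).
        (\<forall>i\<in>U. le i (res (Sup U) i s) (res (Sup U) i t)) \<longrightarrow> le (Sup U) s t)"

definition has_left_adjoint :: "'a set \<Rightarrow> ('a \<Rightarrow> 'a \<Rightarrow> bool) \<Rightarrow> 'a set \<Rightarrow> ('a \<Rightarrow> 'a \<Rightarrow> bool) \<Rightarrow> ('a \<Rightarrow> 'a) \<Rightarrow> bool" where
  "has_left_adjoint A leA B leB f \<longleftrightarrow>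
     (\<exists>l. (\<forall>y\<in>B. l y \<in> A) \<and> (\<forall>x\<in>A. \<forall>y\<in>B. leA (l y) x \<longleftrightarrow> leB y (f x)))"

definition has_right_adjoint :: "'a set \<Rightarrow> ('a \<Rightarrow> 'a \<Rightarrow> bool) \<Rightarrow> 'a set \<Rightarrow> ('a \<Rightarrow> 'a \<Rightarrow> bool) \<Rightarrow> ('a \<Rightarrow> 'a) \<Rightarrow> bool" where
  "has_right_adjoint A leA B leB f \<longleftrightarrow>
     (\<exists>r. (\<forall>y\<in>B. r y \<in> A) \<and> (\<forall>x\<in>A. \<forall>y\<in>B. leB (f x) y \<longleftrightarrow> leA x (r y)))"

definition is_complete_posheaf ::
  "('o::complete_lattice \<Rightarrow> 'a set) \<Rightarrow> ('o \<Rightarrow> 'o \<Rightarrow> 'a \<Rightarrow> 'a) \<Rightarrow> ('o \<Rightarrow> 'a \<Rightarrow> 'a \<Rightarrow> bool) \<Rightarrow> bool" where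
  "is_complete_posheaf F res le \<longleftrightarrow> is_posheaf F res le \<and>
     (\<forall>u. ps_complete_lattice (le u) (F u)) \<and>
     (\<forall>u v. v \<le> u \<longrightarrow>
        res u v ` F u = F v \<and>
        has_left_adjoint (F u) (le u) (F v) (le v) (res u v) \<and>
        has_right_adjoint (F u) (le u) (F v) (le v) (res u v))"

(* S is a subsheaf of F^u (F restricted to the opens below u); S v = {} outside the down-set of u *)
definition is_subsheaf_below ::
  "('o::complete_lattice \<Rightarrow> 'a set) \<Rightarrow> ('o \<Rightarrow> 'o \<Rightarrow> 'a \<Rightarrow> 'a) \<Rightarrow> 'o \<Rightarrow> ('o \<Rightarrow> 'a set) \<Rightarrow> bool" where
  "is_subsheaf_below F res u S \<longleftrightarrow>
     (\<forall>v. \<not> v \<le> u \<longrightarrow> S v = {}) \<and>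
     (\<forall>v. v \<le> u \<longrightarrow> S v \<subseteq> F v) \<and>
     (\<forall>v w. w \<le> v \<longrightarrow> v \<le> u \<longrightarrow> (\<forall>x\<in>S v. res v w x \<in> S w)) \<and>
     (\<forall>V. Sup V \<le> u \<longrightarrow> (\<forall>x\<in>F (Sup V). (\<forall>i\<in>V. res (Sup V) i x \<in> S i) \<longrightarrow> x \<in> S (Sup V)))"

definition PF :: "('o::complete_lattice \<Rightarrow> 'a set) \<Rightarrow> ('o \<Rightarrow> 'o \<Rightarrow> 'a \<Rightarrow> 'a) \<Rightarrow> 'o \<Rightarrow> ('o \<Rightarrow> 'a set) set" where
  "PF F res u = {S. is_subsheaf_below F res u S}"

definition gen_subsheaf ::
  "('o::complete_lattice \<Rightarrow> 'a set) \<Rightarrow> ('o \<Rightarrow> 'o \<Rightarrow> 'a \<Rightarrow> 'a) \<Rightarrow> 'o \<Rightarrow> ('o \<Rightarrow> 'a set) \<Rightarrow> ('o \<Rightarrow> 'a set)" where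
  "gen_subsheaf F res u T = (\<lambda>v. \<Inter>{S v | S. S \<in> PF F res u \<and> (\<forall>w. w \<le> u \<longrightarrow> T w \<subseteq> S w)})"

definition sup_F ::
  "('o::complete_lattice \<Rightarrow> 'a set) \<Rightarrow> ('o \<Rightarrow> 'o \<Rightarrow> 'a \<Rightarrow> 'a) \<Rightarrow> ('o \<Rightarrow> 'a \<Rightarrow> 'a \<Rightarrow> bool) \<Rightarrow> 'o \<Rightarrow> ('o \<Rightarrow> 'a set) \<Rightarrow> 'a" where
  "sup_F F res le u S = ps_least (le u) (F u) (\<lambda>z. \<forall>v. v \<le> u \<longrightarrow> (\<forall>y\<in>S v. le v y (res u v z)))"

definition m_F :: "('o \<Rightarrow> 'a set) \<Rightarrow> ('o \<Rightarrow> 'a \<Rightarrow> 'a \<Rightarrow> bool) \<Rightarrow> 'o \<Rightarrow> 'a \<Rightarrow> 'a \<Rightarrow> 'a" where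
  "m_F F le u x y = ps_meet (le u) (F u) x y"

definition mu_F ::
  "('o::complete_lattice \<Rightarrow> 'a set) \<Rightarrow> ('o \<Rightarrow> 'o \<Rightarrow> 'a \<Rightarrow> 'a) \<Rightarrow> ('o \<Rightarrow> 'a \<Rightarrow> 'a \<Rightarrow> bool) \<Rightarrow> 'o \<Rightarrow> 'a \<Rightarrow> ('o \<Rightarrow> 'a set) \<Rightarrow> ('o \<Rightarrow> 'a set)" where
  "mu_F F res le u x S = gen_subsheaf F res u
     (\<lambda>v. if v \<le> u then {m_F F le v (res u v x) y | y. y \<in> S v} else {})"

(* complete Heyting sheaf: sup_F o mu_F = m_F o (1_F x sup_F) as morphisms F x PF -> F,
   i.e. at every stage u *)
definition is_complete_heyting_sheaf ::
  "('o::complete_lattice \<Rightarrow> 'a set) \<Rightarrow> ('o \<Rightarrow> 'o \<Rightarrow> 'a \<Rightarrow> 'a) \<Rightarrow> ('o \<Rightarrow> 'a \<Rightarrow> 'a \<Rightarrow> bool) \<Rightarrow> bool" where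
  "is_complete_heyting_sheaf F res le \<longleftrightarrow>
     (\<forall>u. \<forall>x\<in>F u. \<forall>S\<in>PF F res u.
        sup_F F res le u (mu_F F res le u x S) = m_F F le u x (sup_F F res le u S))"

definition l_adj ::
  "('o::complete_lattice \<Rightarrow> 'a set) \<Rightarrow> ('o \<Rightarrow> 'o \<Rightarrow> 'a \<Rightarrow> 'a) \<Rightarrow> ('o \<Rightarrow> 'a \<Rightarrow> 'a \<Rightarrow> bool) \<Rightarrow> 'o \<Rightarrow> 'o \<Rightarrow> 'a \<Rightarrow> 'a" where
  "l_adj F res le v u y = ps_least (le u) (F u) (\<lambda>x. le v y (res u v x))"

end

theory Submission
  imports Defs
begin

text \<open>The supremum of a subsheaf S of F restricted below u is the join in F(u) of the elements
  l_{w,u}(s), s \<in> S(w), and the supremum of \<mu>(x, S) is the join of the l_{w,u}(x|_w \<and> s). Both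
  follow from the fact that the elements s with x|_w \<and> s \<le> z|_w form a subsheaf, so that a bound
  for the generators of a subsheaf bounds the whole subsheaf. Given (2), Frobenius turns
  l_{w,u}(x|_w \<and> s) into x \<and> l_{w,u}(s), and frame distributivity in F(u) yields (1). Conversely,
  applying (1) to the subsheaf generated by a set A \<subseteq> F(u) gives the frame law, and to the
  subsheaf generated by a single y \<in> F(v) gives Frobenius.\<close>

lemma ps_least_eqI:
  assumes "ps_partial_order le A" "z \<in> A" "P z" "\<forall>w\<in>A. P w \<longrightarrow> le z w"
  shows "ps_least le A P = z"
  unfolding ps_least_def
proof (rule the_equality)
  show "z \<in> A \<and> P z \<and> (\<forall>w\<in>A. P w \<longrightarrow> le z w)" using assms by blast
  fix z' assume "z' \<in> A \<and> P z' \<and> (\<forall>w\<in>A. P w \<longrightarrow> le z' w)"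
  then show "z' = z" using assms unfolding ps_partial_order_def by metis
qed

lemma ps_least_cong:
  assumes "\<And>z. z \<in> A \<Longrightarrow> P z \<longleftrightarrow> Q z"
  shows "ps_least le A P = ps_least le A Q"
proof -
  have "(\<lambda>z. z \<in> A \<and> P z \<and> (\<forall>w\<in>A. P w \<longrightarrow> le z w)) = (\<lambda>z. z \<in> A \<and> Q z \<and> (\<forall>w\<in>A. Q w \<longrightarrow> le z w))"
    using assms by blast
  then show ?thesis unfolding ps_least_def by simp
qed

lemma ps_join_is_lub:
  assumes "ps_complete_lattice le A" "S \<subseteq> A"
  shows "ps_is_lub le A S (ps_join le A S)"
proof -
  obtain z where z: "ps_is_lub le A S z" using assms unfolding ps_complete_lattice_def by blast
  have "ps_join le A S = z" unfolding ps_join_def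
    by (rule ps_least_eqI) (use assms(1) z in \<open>auto simp: ps_complete_lattice_def ps_is_lub_def\<close>)
  with z show ?thesis by simp
qed

lemma ps_join_singleton:
  assumes "ps_partial_order le A" "a \<in> A"
  shows "ps_join le A {a} = a"
proof -
  have "le a a" using assms unfolding ps_partial_order_def by blast
  then show ?thesis unfolding ps_join_def by (intro ps_least_eqI) (use assms in auto)
qed

lemma ps_meet_is_glb:
  assumes "ps_complete_lattice le A" "x \<in> A" "y \<in> A"
  shows "ps_meet le A x y \<in> A \<and> le (ps_meet le A x y) x \<and> le (ps_meet le A x y) y \<and>
     (\<forall>w\<in>A. le w x \<and> le w y \<longrightarrow> le w (ps_meet le A x y))"
proof -
  have po: "ps_partial_order le A" using assms(1) unfolding ps_complete_lattice_def by blast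
  define L where "L = {w\<in>A. le w x \<and> le w y}"
  define m where "m = ps_join le A L"
  have "ps_is_lub le A L m" unfolding m_def by (rule ps_join_is_lub[OF assms(1)]) (auto simp: L_def)
  then have "m \<in> A" "\<forall>w\<in>L. le w m" "\<forall>w\<in>A. (\<forall>s\<in>L. le s w) \<longrightarrow> le m w"
    unfolding ps_is_lub_def by blast+
  then have m: "m \<in> A \<and> le m x \<and> le m y \<and> (\<forall>w\<in>A. le w x \<and> le w y \<longrightarrow> le w m)"
    using assms(2,3) unfolding L_def by blast
  have "ps_meet le A x y = m" unfolding ps_meet_def
  proof (rule the_equality)
    fix z assume "z \<in> A \<and> le z x \<and> le z y \<and> (\<forall>w\<in>A. le w x \<and> le w y \<longrightarrow> le w z)"
    then show "z = m" using m po unfolding ps_partial_order_def by metis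
  qed (fact m)
  with m show ?thesis by simp
qed

lemma setcompr2_cong:
  assumes "\<And>w s. P w s \<Longrightarrow> f w s = g w s"
  shows "{f w s | w s. P w s} = {g w s | w s. P w s}"
  unfolding set_eq_iff mem_Collect_eq using assms by metis

locale presheaf_on =
  fixes F :: "'o::complete_lattice \<Rightarrow> 'a set"
    and res :: "'o \<Rightarrow> 'o \<Rightarrow> 'a \<Rightarrow> 'a"
  assumes presheaf: "is_presheaf F res"
begin

lemma res_in: "v \<le> u \<Longrightarrow> x \<in> F u \<Longrightarrow> res u v x \<in> F v"
  using presheaf unfolding is_presheaf_def by blast

lemma res_id: "x \<in> F u \<Longrightarrow> res u u x = x"
  using presheaf unfolding is_presheaf_def by simp

lemma res_comp: "w \<le> v \<Longrightarrow> v \<le> u \<Longrightarrow> x \<in> F u \<Longrightarrow> res v w (res u v x) = res u w x"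
  using presheaf unfolding is_presheaf_def by blast

lemma PF_subset_carrier: "S \<in> PF F res u \<Longrightarrow> w \<le> u \<Longrightarrow> S w \<subseteq> F w"
  unfolding PF_def is_subsheaf_below_def by simp

lemma PF_empty: "S \<in> PF F res u \<Longrightarrow> \<not> v \<le> u \<Longrightarrow> S v = {}"
  unfolding PF_def is_subsheaf_below_def by simp

lemma PF_res_closed: "S \<in> PF F res u \<Longrightarrow> w \<le> v \<Longrightarrow> v \<le> u \<Longrightarrow> x \<in> S v \<Longrightarrow> res v w x \<in> S w"
  unfolding PF_def is_subsheaf_below_def by simp

lemma PF_glue:
  "S \<in> PF F res u \<Longrightarrow> Sup V \<le> u \<Longrightarrow> x \<in> F (Sup V) \<Longrightarrow> \<forall>i\<in>V. res (Sup V) i x \<in> S i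
     \<Longrightarrow> x \<in> S (Sup V)"
  unfolding PF_def is_subsheaf_below_def by simp

lemma carrier_below_in_PF: "(\<lambda>w. if w \<le> u then F w else {}) \<in> PF F res u"
  unfolding PF_def mem_Collect_eq is_subsheaf_below_def
proof (intro conjI allI impI ballI)
  fix v w x assume "w \<le> v" "v \<le> u" "x \<in> (if v \<le> u then F v else {})"
  then show "res v w x \<in> (if w \<le> u then F w else {})" using res_in order_trans[of w v u] by auto
qed auto

lemma mem_gen_subsheaf_iff:
  "a \<in> gen_subsheaf F res u T v \<longleftrightarrow> (\<forall>S\<in>PF F res u. (\<forall>w. w \<le> u \<longrightarrow> T w \<subseteq> S w) \<longrightarrow> a \<in> S v)"
  unfolding gen_subsheaf_def by auto

lemma gen_subsheaf_le:
  assumes "D \<in> PF F res u" "\<forall>w. w \<le> u \<longrightarrow> T w \<subseteq> D w"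
  shows "gen_subsheaf F res u T v \<subseteq> D v"
  using assms unfolding subset_iff mem_gen_subsheaf_iff by blast

lemma gen_subsheaf_in_PF:
  assumes "\<forall>w. w \<le> u \<longrightarrow> T w \<subseteq> F w"
  shows "gen_subsheaf F res u T \<in> PF F res u"
proof -
  let ?G = "gen_subsheaf F res u T"
  have G_below: "?G v \<subseteq> (if v \<le> u then F v else {})" for v
    by (rule gen_subsheaf_le[OF carrier_below_in_PF]) (use assms in simp)
  show ?thesis unfolding PF_def mem_Collect_eq is_subsheaf_below_def
  proof (intro conjI allI impI ballI)
    fix v assume "\<not> v \<le> u" then show "?G v = {}" using G_below[of v] by auto
  next
    fix v assume "v \<le> u" then show "?G v \<subseteq> F v" using G_below[of v] by auto
  next
    fix v w x assume h: "w \<le> v" "v \<le> u" "x \<in> ?G v"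
    show "res v w x \<in> ?G w" unfolding mem_gen_subsheaf_iff
    proof (intro ballI impI)
      fix S assume "S \<in> PF F res u" "\<forall>w. w \<le> u \<longrightarrow> T w \<subseteq> S w"
      with h have "x \<in> S v" unfolding mem_gen_subsheaf_iff by blast
      with \<open>S \<in> PF F res u\<close> h(1,2) show "res v w x \<in> S w" by (rule PF_res_closed)
    qed
  next
    fix V x assume h: "Sup V \<le> u" "x \<in> F (Sup V)" "\<forall>i\<in>V. res (Sup V) i x \<in> ?G i"
    show "x \<in> ?G (Sup V)" unfolding mem_gen_subsheaf_iff
    proof (intro ballI impI)
      fix S assume "S \<in> PF F res u" "\<forall>w. w \<le> u \<longrightarrow> T w \<subseteq> S w"
      with h(3) have "\<forall>i\<in>V. res (Sup V) i x \<in> S i" unfolding mem_gen_subsheaf_iff by blast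
      with \<open>S \<in> PF F res u\<close> h(1,2) show "x \<in> S (Sup V)" by (rule PF_glue)
    qed
  qed
qed

lemma gen_subsheaf_le_iff:
  assumes "D \<in> PF F res u"
  shows "(\<forall>w. w \<le> u \<longrightarrow> gen_subsheaf F res u T w \<subseteq> D w) \<longleftrightarrow> (\<forall>w. w \<le> u \<longrightarrow> T w \<subseteq> D w)"
proof
  assume "\<forall>w. w \<le> u \<longrightarrow> gen_subsheaf F res u T w \<subseteq> D w"
  moreover have "T w \<subseteq> gen_subsheaf F res u T w" if "w \<le> u" for w
    using that unfolding subset_iff mem_gen_subsheaf_iff by blast
  ultimately show "\<forall>w. w \<le> u \<longrightarrow> T w \<subseteq> D w" by blast
next
  assume "\<forall>w. w \<le> u \<longrightarrow> T w \<subseteq> D w"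
  with assms show "\<forall>w. w \<le> u \<longrightarrow> gen_subsheaf F res u T w \<subseteq> D w"
    using gen_subsheaf_le by blast
qed

lemma gen_subsheaf_of_PF:
  assumes "S \<in> PF F res u"
  shows "gen_subsheaf F res u S = S"
proof (rule ext, rule equalityI)
  fix v
  show "gen_subsheaf F res u S v \<subseteq> S v"
    using gen_subsheaf_le[OF assms] by blast
  show "S v \<subseteq> gen_subsheaf F res u S v"
  proof
    fix a assume a: "a \<in> S v"
    then have "v \<le> u" using PF_empty[OF assms] by blast
    with a show "a \<in> gen_subsheaf F res u S v" unfolding mem_gen_subsheaf_iff by blast
  qed
qed

definition natural_below :: "'o \<Rightarrow> ('o \<Rightarrow> 'a \<Rightarrow> 'a) \<Rightarrow> bool" where
  "natural_below u f \<longleftrightarrow> (\<forall>w. w \<le> u \<longrightarrow> (\<forall>s\<in>F w. f w s \<in> F w)) \<and>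
     (\<forall>v w. w \<le> v \<longrightarrow> v \<le> u \<longrightarrow> (\<forall>s\<in>F v. res v w (f v s) = f w (res v w s)))"

lemma natural_below_id: "natural_below u (\<lambda>_ s. s)"
  unfolding natural_below_def using res_in by blast

end

locale complete_posheaf =
  fixes F :: "'o::complete_lattice \<Rightarrow> 'a set"
    and res :: "'o \<Rightarrow> 'o \<Rightarrow> 'a \<Rightarrow> 'a"
    and le :: "'o \<Rightarrow> 'a \<Rightarrow> 'a \<Rightarrow> bool"
  assumes complete: "is_complete_posheaf F res le"
begin

lemma posheaf: "is_posheaf F res le"
  using complete unfolding is_complete_posheaf_def by (rule conjunct1)

sublocale presheaf_on F res
  by unfold_locales (use posheaf in \<open>unfold is_posheaf_def is_sheaf_def, elim conjE\<close>)

lemma complete_lattice: "ps_complete_lattice (le u) (F u)"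
  using complete unfolding is_complete_posheaf_def by (elim conjE) (erule allE)

lemma partial_order: "ps_partial_order (le u) (F u)"
  using complete_lattice unfolding ps_complete_lattice_def by (rule conjunct1)

lemma le_refl: "x \<in> F u \<Longrightarrow> le u x x"
  using partial_order unfolding ps_partial_order_def by blast

lemma le_antisym: "x \<in> F u \<Longrightarrow> y \<in> F u \<Longrightarrow> le u x y \<Longrightarrow> le u y x \<Longrightarrow> x = y"
  using partial_order unfolding ps_partial_order_def by blast

lemma res_mono: "v \<le> u \<Longrightarrow> x \<in> F u \<Longrightarrow> y \<in> F u \<Longrightarrow> le u x y \<Longrightarrow> le v (res u v x) (res u v y)"
  using posheaf unfolding is_posheaf_def by simp

lemma le_glue:
  "s \<in> F (Sup U) \<Longrightarrow> t \<in> F (Sup U) \<Longrightarrow> (\<forall>i\<in>U. le i (res (Sup U) i s) (res (Sup U) i t))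
     \<Longrightarrow> le (Sup U) s t"
  using posheaf unfolding is_posheaf_def by simp

lemma m_F_is_glb:
  assumes "x \<in> F u" "y \<in> F u"
  shows "m_F F le u x y \<in> F u \<and> le u (m_F F le u x y) x \<and> le u (m_F F le u x y) y \<and>
     (\<forall>w\<in>F u. le u w x \<and> le u w y \<longrightarrow> le u w (m_F F le u x y))"
  unfolding m_F_def by (rule ps_meet_is_glb[OF complete_lattice assms])

lemma m_F_in: "x \<in> F u \<Longrightarrow> y \<in> F u \<Longrightarrow> m_F F le u x y \<in> F u"
  using m_F_is_glb by blast

lemma l_adj_in_and_le_iff:
  assumes "v \<le> u" "y \<in> F v"
  shows "l_adj F res le v u y \<in> F u \<and>
    (\<forall>x\<in>F u. le u (l_adj F res le v u y) x \<longleftrightarrow> le v y (res u v x))"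
proof -
  have "has_left_adjoint (F u) (le u) (F v) (le v) (res u v)"
    using complete assms(1) unfolding is_complete_posheaf_def by simp
  then obtain l where l: "\<forall>y\<in>F v. l y \<in> F u" "\<forall>x\<in>F u. \<forall>y\<in>F v. le u (l y) x \<longleftrightarrow> le v y (res u v x)"
    unfolding has_left_adjoint_def by blast
  have ly: "l y \<in> F u" and iff: "\<forall>x\<in>F u. le u (l y) x \<longleftrightarrow> le v y (res u v x)"
    using l assms(2) by simp_all
  have "l_adj F res le v u y = l y" unfolding l_adj_def
    by (rule ps_least_eqI[OF partial_order ly]) (use ly iff le_refl[OF ly] in auto)
  with ly iff show ?thesis by simp
qed

lemma l_adj_in: "v \<le> u \<Longrightarrow> y \<in> F v \<Longrightarrow> l_adj F res le v u y \<in> F u"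
  using l_adj_in_and_le_iff by blast

lemma l_adj_le_iff:
  "v \<le> u \<Longrightarrow> y \<in> F v \<Longrightarrow> x \<in> F u \<Longrightarrow> le u (l_adj F res le v u y) x \<longleftrightarrow> le v y (res u v x)"
  using l_adj_in_and_le_iff by blast

lemma l_adj_self: "y \<in> F u \<Longrightarrow> l_adj F res le u u y = y"
  unfolding l_adj_def by (rule ps_least_eqI[OF partial_order]) (auto simp: res_id le_refl)

text \<open>Restriction preserves binary meets, being a right adjoint.\<close>

lemma res_m_F:
  assumes wv: "w \<le> v" and a: "a \<in> F v" and b: "b \<in> F v"
  shows "res v w (m_F F le v a b) = m_F F le w (res v w a) (res v w b)"
proof -
  let ?m = "m_F F le v a b" and ?c = "m_F F le w (res v w a) (res v w b)"
  have m: "?m \<in> F v" "le v ?m a" "le v ?m b" "\<forall>x\<in>F v. le v x a \<and> le v x b \<longrightarrow> le v x ?m"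
    using m_F_is_glb[OF a b] by blast+
  have ra: "res v w a \<in> F w" and rb: "res v w b \<in> F w" using res_in wv a b by auto
  have c: "?c \<in> F w" "le w ?c (res v w a)" "le w ?c (res v w b)"
    "\<forall>x\<in>F w. le w x (res v w a) \<and> le w x (res v w b) \<longrightarrow> le w x ?c"
    using m_F_is_glb[OF ra rb] by blast+
  have "le v (l_adj F res le w v ?c) ?m"
    using m(4) l_adj_in[OF wv c(1)] l_adj_le_iff[OF wv c(1)] a b c(2,3) by blast
  then have c_le: "le w ?c (res v w ?m)" using l_adj_le_iff[OF wv c(1) m(1)] by simp
  have "le w (res v w ?m) ?c"
    using c(4) res_in[OF wv m(1)] res_mono[OF wv m(1)] a b m(2,3) by blast
  with c_le show ?thesis using le_antisym res_in[OF wv m(1)] c(1) by blast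
qed

lemma natural_below_m_F:
  assumes "x \<in> F u"
  shows "natural_below u (\<lambda>w. m_F F le w (res u w x))"
  unfolding natural_below_def
proof (intro conjI allI impI ballI)
  fix w s assume "w \<le> u" "s \<in> F w"
  then show "m_F F le w (res u w x) s \<in> F w" using res_in[OF _ assms] m_F_in by blast
next
  fix v w s assume wv: "w \<le> v" and vu: "v \<le> u" and s: "s \<in> F v"
  have "res v w (m_F F le v (res u v x) s) = m_F F le w (res v w (res u v x)) (res v w s)"
    by (rule res_m_F[OF wv res_in[OF vu assms] s])
  also have "\<dots> = m_F F le w (res u w x) (res v w s)" using res_comp[OF wv vu assms] by simp
  finally show "res v w (m_F F le v (res u v x) s) = m_F F le w (res u w x) (res v w s)" .
qed

definition down_preimage :: "'o \<Rightarrow> ('o \<Rightarrow> 'a \<Rightarrow> 'a) \<Rightarrow> 'a \<Rightarrow> 'o \<Rightarrow> 'a set" where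
  "down_preimage u f z = (\<lambda>w. if w \<le> u then {s \<in> F w. le w (f w s) (res u w z)} else {})"

lemma down_preimage_in_PF:
  assumes f: "natural_below u f" and z: "z \<in> F u"
  shows "down_preimage u f z \<in> PF F res u"
  unfolding PF_def mem_Collect_eq is_subsheaf_below_def
proof (intro conjI allI impI ballI)
  fix v w s assume wv: "w \<le> v" and vu: "v \<le> u" and "s \<in> down_preimage u f z v"
  then have s: "s \<in> F v" "le v (f v s) (res u v z)" unfolding down_preimage_def by auto
  have "le w (res v w (f v s)) (res v w (res u v z))"
    using res_mono[OF wv _ _ s(2)] f s(1) vu res_in[OF vu z] unfolding natural_below_def by blast
  then show "res v w s \<in> down_preimage u f z w"
    using f wv vu s(1) res_in res_comp[OF wv vu z]
    unfolding down_preimage_def natural_below_def by (auto intro: order_trans)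
next
  fix V s assume Vu: "Sup V \<le> u" and s: "s \<in> F (Sup V)"
    and loc: "\<forall>i\<in>V. res (Sup V) i s \<in> down_preimage u f z i"
  have "le (Sup V) (f (Sup V) s) (res u (Sup V) z)"
  proof (rule le_glue)
    show "f (Sup V) s \<in> F (Sup V)" using f Vu s unfolding natural_below_def by blast
    show "res u (Sup V) z \<in> F (Sup V)" using res_in Vu z by blast
    show "\<forall>i\<in>V. le i (res (Sup V) i (f (Sup V) s)) (res (Sup V) i (res u (Sup V) z))"
    proof
      fix i assume i: "i \<in> V"
      then have iV: "i \<le> Sup V" by (rule Sup_upper)
      from iV Vu have "i \<le> u" by (rule order_trans)
      with i iV loc f Vu s show "le i (res (Sup V) i (f (Sup V) s)) (res (Sup V) i (res u (Sup V) z))"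
        using res_comp[OF iV Vu z] unfolding down_preimage_def natural_below_def by auto
    qed
  qed
  with Vu s show "s \<in> down_preimage u f z (Sup V)" unfolding down_preimage_def by auto
qed (auto simp: down_preimage_def)

definition dominates :: "'o \<Rightarrow> ('o \<Rightarrow> 'a \<Rightarrow> 'a) \<Rightarrow> ('o \<Rightarrow> 'a set) \<Rightarrow> 'a \<Rightarrow> bool" where
  "dominates u f T z \<longleftrightarrow> (\<forall>w. w \<le> u \<longrightarrow> (\<forall>t\<in>T w. le w (f w t) (res u w z)))"

lemma sup_F_eq_least_dominates: "sup_F F res le u S = ps_least (le u) (F u) (dominates u (\<lambda>_ t. t) S)"
  unfolding sup_F_def dominates_def ..

lemma dominates_gen_subsheaf_iff:
  assumes f: "natural_below u f" and T: "\<forall>w. w \<le> u \<longrightarrow> T w \<subseteq> F w" and z: "z \<in> F u"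
  shows "dominates u f (gen_subsheaf F res u T) z \<longleftrightarrow> dominates u f T z"
proof -
  have dominates_iff: "dominates u f S z \<longleftrightarrow> (\<forall>w. w \<le> u \<longrightarrow> S w \<subseteq> down_preimage u f z w)"
    if "\<forall>w. w \<le> u \<longrightarrow> S w \<subseteq> F w" for S
    using that unfolding dominates_def down_preimage_def by auto
  have G: "\<forall>w. w \<le> u \<longrightarrow> gen_subsheaf F res u T w \<subseteq> F w"
    using PF_subset_carrier[OF gen_subsheaf_in_PF[OF T]] by blast
  have "dominates u f (gen_subsheaf F res u T) z
      \<longleftrightarrow> (\<forall>w. w \<le> u \<longrightarrow> gen_subsheaf F res u T w \<subseteq> down_preimage u f z w)"
    by (rule dominates_iff[OF G])
  also have "\<dots> \<longleftrightarrow> (\<forall>w. w \<le> u \<longrightarrow> T w \<subseteq> down_preimage u f z w)"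
    by (rule gen_subsheaf_le_iff[OF down_preimage_in_PF[OF f z]])
  also have "\<dots> \<longleftrightarrow> dominates u f T z"
    by (rule dominates_iff[OF T, symmetric])
  finally show ?thesis .
qed

lemma least_dominates_eq_join_l_adj:
  assumes "\<forall>w. w \<le> u \<longrightarrow> (\<forall>t\<in>T w. f w t \<in> F w)"
  shows "ps_least (le u) (F u) (dominates u f T)
    = ps_join (le u) (F u) {l_adj F res le w u (f w t) | w t. w \<le> u \<and> t \<in> T w}"
  unfolding ps_join_def
proof (rule ps_least_cong)
  fix z assume z: "z \<in> F u"
  have "le w (f w t) (res u w z) \<longleftrightarrow> le u (l_adj F res le w u (f w t)) z" if "w \<le> u" "t \<in> T w" for w t
    using l_adj_le_iff[OF that(1) _ z] assms that by simp
  then show "dominates u f T z \<longleftrightarrow>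
      (\<forall>s\<in>{l_adj F res le w u (f w t) | w t. w \<le> u \<and> t \<in> T w}. le u s z)"
    unfolding dominates_def by blast
qed

lemma sup_F_gen_subsheaf_least:
  assumes "\<forall>w. w \<le> u \<longrightarrow> T w \<subseteq> F w"
  shows "sup_F F res le u (gen_subsheaf F res u T) = ps_least (le u) (F u) (dominates u (\<lambda>_ t. t) T)"
  unfolding sup_F_eq_least_dominates
  by (rule ps_least_cong) (rule dominates_gen_subsheaf_iff[OF natural_below_id assms])

lemma sup_F_gen_subsheaf:
  assumes "\<forall>w. w \<le> u \<longrightarrow> T w \<subseteq> F w"
  shows "sup_F F res le u (gen_subsheaf F res u T)
    = ps_join (le u) (F u) {l_adj F res le w u t | w t. w \<le> u \<and> t \<in> T w}"
  using sup_F_gen_subsheaf_least[OF assms] least_dominates_eq_join_l_adj[of u T "\<lambda>_ t. t"] assms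
  by auto

lemma sup_F_mu_F_gen_subsheaf:
  assumes T: "\<forall>w. w \<le> u \<longrightarrow> T w \<subseteq> F w" and x: "x \<in> F u"
  shows "sup_F F res le u (mu_F F res le u x (gen_subsheaf F res u T))
    = ps_join (le u) (F u) {l_adj F res le w u (m_F F le w (res u w x) t) | w t. w \<le> u \<and> t \<in> T w}"
proof -
  let ?G = "gen_subsheaf F res u T" and ?meet_x = "\<lambda>w. m_F F le w (res u w x)"
  let ?T' = "\<lambda>v. if v \<le> u then {?meet_x v y | y. y \<in> ?G v} else {}"
  have G: "\<forall>w. w \<le> u \<longrightarrow> ?G w \<subseteq> F w" using PF_subset_carrier gen_subsheaf_in_PF[OF T] by blast
  have T': "\<forall>w. w \<le> u \<longrightarrow> ?T' w \<subseteq> F w" using G x res_in m_F_in by fastforce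
  have "sup_F F res le u (mu_F F res le u x ?G) = ps_least (le u) (F u) (dominates u (\<lambda>_ t. t) ?T')"
    unfolding mu_F_def using sup_F_gen_subsheaf_least[OF T'] .
  also have "\<dots> = ps_least (le u) (F u) (dominates u ?meet_x ?G)"
    by (rule ps_least_cong) (auto simp: dominates_def)
  also have "\<dots> = ps_least (le u) (F u) (dominates u ?meet_x T)"
    by (rule ps_least_cong) (rule dominates_gen_subsheaf_iff[OF natural_below_m_F[OF x] T])
  also have "\<dots> = ps_join (le u) (F u) {l_adj F res le w u (?meet_x w t) | w t. w \<le> u \<and> t \<in> T w}"
    by (rule least_dominates_eq_join_l_adj) (use T x res_in m_F_in in blast)
  finally show ?thesis .
qed

lemma l_adj_self_setcompr:
  assumes "\<forall>a\<in>A. g a \<in> F u"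
  shows "{l_adj F res le u u (g a) | a. a \<in> A} = {g a | a. a \<in> A}"
  unfolding Setcompr_eq_image by (rule image_cong) (use assms l_adj_self in simp_all)

lemma complete_heyting_sheaf_frame:
  assumes "is_complete_heyting_sheaf F res le"
  shows "ps_frame (le u) (F u)"
  unfolding ps_frame_def
proof (intro conjI ballI allI impI complete_lattice)
  fix x A assume x: "x \<in> F u" and A: "A \<subseteq> F u"
  let ?T = "\<lambda>w. if w = u then A else {}"
  let ?GT = "gen_subsheaf F res u ?T"
  have T: "\<forall>w. w \<le> u \<longrightarrow> ?T w \<subseteq> F w" using A by auto
  have "{l_adj F res le w u t | w t. w \<le> u \<and> t \<in> ?T w} = {l_adj F res le u u a | a. a \<in> A}"
    by auto
  also have "\<dots> = A" using l_adj_self_setcompr[of A "\<lambda>a. a"] A by auto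
  finally have sup_GT: "sup_F F res le u ?GT = ps_join (le u) (F u) A"
    using sup_F_gen_subsheaf[OF T] by simp
  have "{l_adj F res le w u (m_F F le w (res u w x) t) | w t. w \<le> u \<and> t \<in> ?T w}
      = {l_adj F res le u u (m_F F le u x a) | a. a \<in> A}"
    by (auto simp: res_id[OF x])
  also have "\<dots> = {m_F F le u x a | a. a \<in> A}"
    using l_adj_self_setcompr[of A "m_F F le u x"] A x m_F_in by blast
  finally have sup_mu_GT:
    "sup_F F res le u (mu_F F res le u x ?GT) = ps_join (le u) (F u) {m_F F le u x a | a. a \<in> A}"
    using sup_F_mu_F_gen_subsheaf[OF T x] by simp
  have "m_F F le u x (ps_join (le u) (F u) A) = ps_join (le u) (F u) {m_F F le u x a | a. a \<in> A}"
    using assms x gen_subsheaf_in_PF[OF T] sup_GT sup_mu_GT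
    unfolding is_complete_heyting_sheaf_def by metis
  then show "ps_meet (le u) (F u) x (ps_join (le u) (F u) A)
      = ps_join (le u) (F u) {ps_meet (le u) (F u) x s | s. s \<in> A}"
    unfolding m_F_def .
qed

lemma complete_heyting_sheaf_frobenius:
  assumes "is_complete_heyting_sheaf F res le" and vu: "v \<le> u" and x: "x \<in> F u" and y: "y \<in> F v"
  shows "m_F F le u x (l_adj F res le v u y) = l_adj F res le v u (m_F F le v (res u v x) y)"
proof -
  let ?T = "\<lambda>w. if w = v then {y} else {}"
  let ?GT = "gen_subsheaf F res u ?T"
  have T: "\<forall>w. w \<le> u \<longrightarrow> ?T w \<subseteq> F w" using y by auto
  have "{l_adj F res le w u t | w t. w \<le> u \<and> t \<in> ?T w} = {l_adj F res le v u y}"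
    using vu by auto
  then have sup_GT: "sup_F F res le u ?GT = l_adj F res le v u y"
    using sup_F_gen_subsheaf[OF T] ps_join_singleton[OF partial_order l_adj_in[OF vu y]] by simp
  have "{l_adj F res le w u (m_F F le w (res u w x) t) | w t. w \<le> u \<and> t \<in> ?T w}
      = {l_adj F res le v u (m_F F le v (res u v x) y)}"
    using vu by auto
  moreover have "m_F F le v (res u v x) y \<in> F v" using res_in[OF vu x] y m_F_in by blast
  ultimately have sup_mu_GT:
    "sup_F F res le u (mu_F F res le u x ?GT) = l_adj F res le v u (m_F F le v (res u v x) y)"
    using sup_F_mu_F_gen_subsheaf[OF T x] ps_join_singleton[OF partial_order l_adj_in[OF vu]] by simp
  show ?thesis
    using assms(1) x gen_subsheaf_in_PF[OF T] sup_GT sup_mu_GT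
    unfolding is_complete_heyting_sheaf_def by metis
qed

lemma frame_frobenius_complete_heyting_sheaf:
  assumes frame: "\<And>u. ps_frame (le u) (F u)"
    and frobenius: "\<And>u v x y. v \<le> u \<Longrightarrow> x \<in> F u \<Longrightarrow> y \<in> F v \<Longrightarrow>
      m_F F le u x (l_adj F res le v u y) = l_adj F res le v u (m_F F le v (res u v x) y)"
  shows "is_complete_heyting_sheaf F res le"
  unfolding is_complete_heyting_sheaf_def
proof (intro allI ballI)
  fix u x S assume x: "x \<in> F u" and S: "S \<in> PF F res u"
  let ?B = "{l_adj F res le w u s | w s. w \<le> u \<and> s \<in> S w}"
  have S_sub: "\<forall>w. w \<le> u \<longrightarrow> S w \<subseteq> F w" using PF_subset_carrier[OF S] by blast
  have frob_S: "l_adj F res le w u (m_F F le w (res u w x) s) = m_F F le u x (l_adj F res le w u s)"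
    if "w \<le> u" "s \<in> S w" for w s
    using frobenius[OF that(1) x, symmetric] S_sub that by blast
  have "{l_adj F res le w u (m_F F le w (res u w x) s) | w s. w \<le> u \<and> s \<in> S w}
      = {m_F F le u x (l_adj F res le w u s) | w s. w \<le> u \<and> s \<in> S w}"
    by (rule setcompr2_cong) (use frob_S in blast)
  also have "\<dots> = {m_F F le u x b | b. b \<in> ?B}" by blast
  finally have
    "sup_F F res le u (mu_F F res le u x S) = ps_join (le u) (F u) {m_F F le u x b | b. b \<in> ?B}"
    using sup_F_mu_F_gen_subsheaf[OF S_sub x] unfolding gen_subsheaf_of_PF[OF S] by simp
  also have "\<dots> = m_F F le u x (ps_join (le u) (F u) ?B)"
  proof -
    have "?B \<subseteq> F u" using S_sub l_adj_in by blast
    with frame[of u] x show ?thesis unfolding ps_frame_def m_F_def by simp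
  qed
  also have "\<dots> = m_F F le u x (sup_F F res le u S)"
    using sup_F_gen_subsheaf[OF S_sub] unfolding gen_subsheaf_of_PF[OF S] by simp
  finally show "sup_F F res le u (mu_F F res le u x S) = m_F F le u x (sup_F F res le u S)" .
qed

end

theorem proposition3p7:
  fixes F :: "'o::complete_lattice \<Rightarrow> 'a set"
    and res :: "'o \<Rightarrow> 'o \<Rightarrow> 'a \<Rightarrow> 'a"
    and le :: "'o \<Rightarrow> 'a \<Rightarrow> 'a \<Rightarrow> bool"
  assumes frame_opens: "\<And>(a::'o) B. inf a (Sup B) = (SUP b\<in>B. inf a b)"
    and complete: "is_complete_posheaf F res le"
  shows "is_complete_heyting_sheaf F res le \<longleftrightarrow>
         ((\<forall>u. ps_frame (le u) (F u)) \<and>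
          (\<forall>u v. v \<le> u \<longrightarrow> (\<forall>x\<in>F u. \<forall>y\<in>F v.
              m_F F le u x (l_adj F res le v u y)
              = l_adj F res le v u (m_F F le v (res u v x) y))))"
proof -
  interpret complete_posheaf F res le using complete by unfold_locales
  show ?thesis
    using complete_heyting_sheaf_frame complete_heyting_sheaf_frobenius
      frame_frobenius_complete_heyting_sheaf by blast
qed

end
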